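(* Let $E$ be a nonempty closed convex subset of a real Hilbert space $H$. Let $f:E\times E\to\mathbb{R}$ be a bifunction satisfying conditions (A1)–(A4) below, and let $S:E\to E$ be an $(\lambda,\gamma)$-generalized hybrid mapping for some $\lambda,\gamma\in\mathbb{R}$, with $F(S)\cap EP(f)\neq\emptyset$. Let $\{\alpha_n\}$ be a sequence with $0<\alpha\le\alpha_n\le 1$ for all $n$ (for some constant $\alpha>0$), let $\{r_n\}\subset(0,\infty)$ satisfy $\liminf_{n\to\infty} r_n>0$, and let $\{\beta_n\}$ be a sequence in $[b,1]$ for some $b\in(0,1)$ such that $\liminf_{n\to\infty}\beta_n(1-\beta_n)>0$. Let $\{x_n\}$ and $\{u_n\}$ be sequences generated by $x_1=x\in E$ and, for all $n\in\mathbb{N}$, $$u_n\in E \text{ such that } f(u_n,y)+\frac{1}{r_n}\langle y-u_n,u_n-x_n\rangle\ge 0\quad\text{for all } y\in E,$$ $$y_n=(1-\beta_n)x_n+\beta_n Su_n,\qquad x_{n+1}=(1-\alpha_n)x_n+\alpha_n Sy_n.$$ Then $\{x_n\}$ converges weakly to a point $v\in F(S)\cap EP(f)$, where $v=\lim_{n\to\infty}P_{F(S)\cap EP(f)}(x_n)$.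
   Context: $F(S)=\{x\in E: Sx=x\}$ denotes the fixed point set of $S$. A mapping $S:E\to E$ is called $(\lambda,\gamma)$-generalized hybrid if $\lambda\|Sx-Sy\|^2+(1-\lambda)\|x-Sy\|^2\le \gamma\|Sx-y\|^2+(1-\gamma)\|x-y\|^2$ for all $x,y\in E$. For $f:E\times E\to\mathbb{R}$, $EP(f)=\{x\in E: f(x,y)\ge 0 \text{ for all } y\in E\}$. Conditions: (A1) $f(x,x)=0$ for all $x\in E$; (A2) $f(x,y)+f(y,x)\le 0$ for all $x,y\in E$; (A3) for all $x,y,z\in E$, $\lim_{t\downarrow 0} f(tz+(1-t)x,y)\le f(x,y)$; (A4) for each $x\in E$, $y\mapsto f(x,y)$ is convex and lower semicontinuous. For a nonempty closed convex $K\subset H$, $P_K$ denotes the metric (nearest point) projection of $H$ onto $K$; the limit defining $v$ is in norm. *)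

theory Defs
  imports "HOL-Analysis.Analysis" "HOL-Library.Extended_Real"
begin

definition fixset :: "'a set \<Rightarrow> ('a \<Rightarrow> 'a) \<Rightarrow> 'a set" where
  "fixset E S = {x \<in> E. S x = x}"

definition EP :: "'a set \<Rightarrow> ('a \<Rightarrow> 'a \<Rightarrow> real) \<Rightarrow> 'a set" where
  "EP E f = {x \<in> E. \<forall>y\<in>E. f x y \<ge> 0}"

definition generalized_hybrid ::
  "'a::real_inner set \<Rightarrow> real \<Rightarrow> real \<Rightarrow> ('a \<Rightarrow> 'a) \<Rightarrow> bool" where
  "generalized_hybrid E lam gam S \<longleftrightarrow> (\<forall>x\<in>E. S x \<in> E) \<and>
     (\<forall>x\<in>E. \<forall>y\<in>E. lam * (norm (S x - S y))\<^sup>2 + (1 - lam) * (norm (x - S y))\<^sup>2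
                     \<le> gam * (norm (S x - y))\<^sup>2 + (1 - gam) * (norm (x - y))\<^sup>2)"

definition lsc_on :: "'a::topological_space set \<Rightarrow> ('a \<Rightarrow> real) \<Rightarrow> bool" where
  "lsc_on E g \<longleftrightarrow> (\<forall>y\<in>E. \<forall>c. c < g y \<longrightarrow> (\<forall>\<^sub>F z in at y within E. c < g z))"

text \<open>Conditions (A1)-(A4) for a bifunction on E.  (A3) is read with limsup.\<close>
definition bifunction_conditions :: "'a::real_normed_vector set \<Rightarrow> ('a \<Rightarrow> 'a \<Rightarrow> real) \<Rightarrow> bool" where
  "bifunction_conditions E f \<longleftrightarrow>
     (\<forall>x\<in>E. f x x = 0) \<and>
     (\<forall>x\<in>E. \<forall>y\<in>E. f x y + f y x \<le> 0) \<and>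
     (\<forall>x\<in>E. \<forall>y\<in>E. \<forall>z\<in>E.
        Limsup (at_right 0) (\<lambda>t::real. ereal (f (t *\<^sub>R z + (1 - t) *\<^sub>R x) y)) \<le> ereal (f x y)) \<and>
     (\<forall>x\<in>E. convex_on E (\<lambda>y. f x y) \<and> lsc_on E (\<lambda>y. f x y))"

definition metric_proj :: "'a::real_normed_vector set \<Rightarrow> 'a \<Rightarrow> 'a" where
  "metric_proj K x = (THE p. p \<in> K \<and> (\<forall>q\<in>K. norm (x - p) \<le> norm (x - q)))"

definition weakly_converges :: "(nat \<Rightarrow> 'a::real_inner) \<Rightarrow> 'a \<Rightarrow> bool" where
  "weakly_converges x v \<longleftrightarrow> (\<forall>w. (\<lambda>n. x n \<bullet> w) \<longlonglongrightarrow> v \<bullet> w)"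

end

theory Submission
  imports Defs "HOL-Library.Diagonal_Subsequence"
begin

text \<open>Fix a common solution \<open>p\<close>.  The resolvent step satisfies
  \<open>\<parallel>u\<^sub>n - p\<parallel>\<^sup>2 \<le> \<parallel>x\<^sub>n - p\<parallel>\<^sup>2 - \<parallel>u\<^sub>n - x\<^sub>n\<parallel>\<^sup>2\<close> by monotonicity of \<open>f\<close>, and a generalized hybrid
  map is quasi-nonexpansive, so the iteration is Fejer monotone with respect to \<open>F(S) \<inter> EP(f)\<close> and
  the decrease of \<open>\<parallel>x\<^sub>n - p\<parallel>\<^sup>2\<close> forces \<open>u\<^sub>n - x\<^sub>n \<rightarrow> 0\<close> and \<open>x\<^sub>n - S u\<^sub>n \<rightarrow> 0\<close>.
  Every weak cluster point \<open>z\<close> of \<open>x\<^sub>n\<close> is then a weak cluster point of \<open>u\<^sub>n\<close>; it is a fixed point of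
  \<open>S\<close> because \<open>I - S\<close> is demiclosed at \<open>0\<close>, and it solves the equilibrium problem by Minty's lemma.
  Opial's argument for Fejer sequences gives weak convergence, and the limit is identified with the
  strong limit of the projections \<open>P\<^sub>F x\<^sub>n\<close>, which exists because \<open>\<parallel>x\<^sub>n - P\<^sub>F x\<^sub>n\<parallel>\<close> decreases.\<close>

section \<open>Metric projections in Hilbert spaces\<close>

lemma norm_add_sq:
  fixes a b :: "'a::real_inner"
  shows "(norm (a + b))\<^sup>2 = (norm a)\<^sup>2 + 2 * (a \<bullet> b) + (norm b)\<^sup>2"
  by (simp add: power2_norm_eq_inner inner_add inner_commute)

lemma norm_diff_sq:
  fixes a b :: "'a::real_inner"
  shows "(norm (a - b))\<^sup>2 = (norm a)\<^sup>2 - 2 * (a \<bullet> b) + (norm b)\<^sup>2"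
  by (simp add: power2_norm_eq_inner inner_diff inner_commute)

lemma norm_convex_combination_sq:
  fixes a b :: "'a::real_inner"
  shows "(norm ((1 - t) *\<^sub>R a + t *\<^sub>R b))\<^sup>2 =
    (1 - t) * (norm a)\<^sup>2 + t * (norm b)\<^sup>2 - t * (1 - t) * (norm (a - b))\<^sup>2"
  unfolding power2_norm_eq_inner by (simp add: inner_add inner_diff inner_commute algebra_simps)

lemma convex_sq_dist_excess:
  fixes K :: "'a::real_inner set"
  assumes "convex K" "q1 \<in> K" "q2 \<in> K" and lower: "\<And>q. q \<in> K \<Longrightarrow> c \<le> (norm (x - q))\<^sup>2"
  shows "(norm (q1 - q2))\<^sup>2 \<le> 2 * (norm (x - q1))\<^sup>2 + 2 * (norm (x - q2))\<^sup>2 - 4 * c"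
proof -
  define m where "m = (1/2) *\<^sub>R q1 + (1/2) *\<^sub>R q2"
  have "m \<in> K" using assms(1-3) by (simp add: m_def convex_def)
  have parallelogram: "(norm (q1 - q2))\<^sup>2 = 2 * (norm (x - q1))\<^sup>2 + 2 * (norm (x - q2))\<^sup>2 - 4 * (norm (x - m))\<^sup>2"
    unfolding m_def power2_norm_eq_inner by (simp add: inner_add inner_diff inner_commute algebra_simps)
  show ?thesis using parallelogram lower[OF \<open>m \<in> K\<close>] by linarith
qed

lemma minimizing_sequence_Cauchy:
  fixes K :: "'a::real_inner set"
  assumes "convex K" and qK: "\<And>n. q n \<in> K" and lower: "\<And>q. q \<in> K \<Longrightarrow> d \<le> (norm (x - q))\<^sup>2"
    and min: "(\<lambda>n. (norm (x - q n))\<^sup>2) \<longlonglongrightarrow> d"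
  shows "Cauchy q"
proof (rule metric_CauchyI)
  fix e :: real assume "e > 0"
  define \<delta> where "\<delta> n = (norm (x - q n))\<^sup>2 - d" for n
  have "\<delta> \<longlonglongrightarrow> 0" using tendsto_diff[OF min tendsto_const[of d]] by (simp add: \<delta>_def[abs_def])
  moreover have "0 < e\<^sup>2 / 4" using \<open>e > 0\<close> by simp
  ultimately have "\<forall>\<^sub>F n in sequentially. \<delta> n < e\<^sup>2 / 4" by (rule order_tendstoD(2))
  then obtain N where N: "\<And>n. n \<ge> N \<Longrightarrow> \<delta> n < e\<^sup>2 / 4" by (auto simp: eventually_sequentially)
  have "dist (q m) (q n) < e" if "m \<ge> N" "n \<ge> N" for m n
  proof -
    have "(norm (q m - q n))\<^sup>2 \<le> 2 * \<delta> m + 2 * \<delta> n"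
      using convex_sq_dist_excess[OF assms(1) qK qK lower] by (simp add: \<delta>_def)
    also have "\<dots> < e\<^sup>2" using N[OF \<open>m \<ge> N\<close>] N[OF \<open>n \<ge> N\<close>] by simp
    finally show ?thesis using \<open>e > 0\<close> by (simp add: dist_norm power_less_imp_less_base)
  qed
  then show "\<exists>M. \<forall>m\<ge>M. \<forall>n\<ge>M. dist (q m) (q n) < e" by blast
qed

lemma exists_nearest_point:
  fixes K :: "'a::{real_inner,complete_space} set"
  assumes "closed K" "convex K" "K \<noteq> {}"
  shows "\<exists>p\<in>K. \<forall>q\<in>K. norm (x - p) \<le> norm (x - q)"
proof -
  define d where "d = (INF q\<in>K. (norm (x - q))\<^sup>2)"
  have bdd: "bdd_below ((\<lambda>q. (norm (x - q))\<^sup>2) ` K)" by (rule bdd_belowI[of _ 0]) auto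
  have d_le: "d \<le> (norm (x - q))\<^sup>2" if "q \<in> K" for q
    unfolding d_def using bdd that by (rule cINF_lower)
  have "\<exists>q\<in>K. (norm (x - q))\<^sup>2 < d + inverse (real (Suc n))" for n
    using cINF_less_iff[OF assms(3) bdd, of "d + inverse (real (Suc n))"] by (simp add: d_def)
  then obtain q where qK: "\<And>n. q n \<in> K"
    and q_lt: "\<And>n. (norm (x - q n))\<^sup>2 < d + inverse (real (Suc n))"
    by metis
  have min: "(\<lambda>n. (norm (x - q n))\<^sup>2) \<longlonglongrightarrow> d"
  proof (rule real_tendsto_sandwich[OF _ _ tendsto_const])
    show "\<forall>\<^sub>F n in sequentially. d \<le> (norm (x - q n))\<^sup>2" using d_le qK by simp
    show "\<forall>\<^sub>F n in sequentially. (norm (x - q n))\<^sup>2 \<le> d + inverse (real (Suc n))"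
      using q_lt by (simp add: less_imp_le)
    show "(\<lambda>n. d + inverse (real (Suc n))) \<longlonglongrightarrow> d"
      using tendsto_add[OF tendsto_const LIMSEQ_inverse_real_of_nat, of d] by simp
  qed
  then obtain p where "q \<longlonglongrightarrow> p"
    using minimizing_sequence_Cauchy[where q=q, OF assms(2) qK d_le min]
    by (auto simp: Cauchy_convergent_iff convergent_def)
  have "p \<in> K" using closed_sequentially[OF assms(1)] qK \<open>q \<longlonglongrightarrow> p\<close> by blast
  have "(\<lambda>n. (norm (x - q n))\<^sup>2) \<longlonglongrightarrow> (norm (x - p))\<^sup>2"
    by (intro tendsto_intros \<open>q \<longlonglongrightarrow> p\<close>)
  then have "(norm (x - p))\<^sup>2 = d" using min by (rule LIMSEQ_unique)
  then have "norm (x - p) \<le> norm (x - q')" if "q' \<in> K" for q'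
    using d_le[OF that] by (simp add: power2_le_imp_le)
  with \<open>p \<in> K\<close> show ?thesis by blast
qed

lemma nearest_point_variational_ineq:
  fixes K :: "'a::real_inner set"
  assumes "convex K" "p \<in> K" "\<forall>q\<in>K. norm (x - p) \<le> norm (x - q)" "q \<in> K"
  shows "(x - p) \<bullet> (q - p) \<le> 0"
proof (rule ccontr)
  define c where "c = (x - p) \<bullet> (q - p)"
  assume "\<not> ?thesis"
  then have "c > 0" by (simp add: c_def)
  then have "q \<noteq> p" by (auto simp: c_def)
  then have n: "(norm (q - p))\<^sup>2 > 0" by simp
  define t where "t = min 1 (c / (norm (q - p))\<^sup>2)"
  have t: "0 < t" "t \<le> 1" using \<open>c > 0\<close> n by (auto simp: t_def)
  have tn: "t * (norm (q - p))\<^sup>2 \<le> c"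
    using n by (simp add: t_def min_def field_simps)
  have "(1 - t) *\<^sub>R p + t *\<^sub>R q \<in> K" using assms(1,2,4) t by (simp add: convex_def)
  then have "norm (x - p) \<le> norm (x - ((1 - t) *\<^sub>R p + t *\<^sub>R q))" using assms(3) by blast
  also have "\<dots> = norm ((x - p) - t *\<^sub>R (q - p))" by (simp add: algebra_simps)
  finally have "(norm (x - p))\<^sup>2 \<le> (norm ((x - p) - t *\<^sub>R (q - p)))\<^sup>2" by (simp add: power_mono)
  also have "\<dots> = (norm (x - p))\<^sup>2 - 2 * t * c + t * (t * (norm (q - p))\<^sup>2)"
    by (subst norm_diff_sq) (simp add: c_def power2_eq_square)
  finally have "2 * t * c \<le> t * (t * (norm (q - p))\<^sup>2)" by simp
  also have "\<dots> \<le> t * c" using tn t by (intro mult_left_mono) auto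
  finally show False using t \<open>c > 0\<close> by simp
qed

lemma variational_ineq_sq_dist:
  fixes p q x :: "'a::real_inner"
  assumes "(x - p) \<bullet> (q - p) \<le> 0"
  shows "(norm (x - p))\<^sup>2 + (norm (p - q))\<^sup>2 \<le> (norm (x - q))\<^sup>2"
proof -
  have "(norm (x - q))\<^sup>2 = (norm (x - p))\<^sup>2 + (norm (p - q))\<^sup>2 - 2 * ((x - p) \<bullet> (q - p))"
    using norm_diff_sq[of "x - p" "q - p"] by (simp add: norm_minus_commute algebra_simps)
  with assms show ?thesis by linarith
qed

lemma metric_proj_eqI:
  fixes K :: "'a::real_inner set"
  assumes "convex K" "p \<in> K" "\<forall>q\<in>K. norm (x - p) \<le> norm (x - q)"
  shows "metric_proj K x = p"
  unfolding metric_proj_def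
proof (rule the_equality)
  show "p \<in> K \<and> (\<forall>q\<in>K. norm (x - p) \<le> norm (x - q))" using assms(2,3) by blast
  fix p' assume p': "p' \<in> K \<and> (\<forall>q\<in>K. norm (x - p') \<le> norm (x - q))"
  have "(norm (x - p))\<^sup>2 + (norm (p - p'))\<^sup>2 \<le> (norm (x - p'))\<^sup>2"
    using nearest_point_variational_ineq[OF assms] p' by (intro variational_ineq_sq_dist) blast
  moreover have "(norm (x - p'))\<^sup>2 \<le> (norm (x - p))\<^sup>2"
    using p' assms(2) by (simp add: power_mono)
  ultimately have "(norm (p - p'))\<^sup>2 \<le> 0" by linarith
  then show "p' = p" by simp
qed

lemma metric_proj_in:
  fixes K :: "'a::{real_inner,complete_space} set"
  assumes "closed K" "convex K" "K \<noteq> {}"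
  shows "metric_proj K x \<in> K"
  using exists_nearest_point[OF assms, of x] metric_proj_eqI[OF assms(2)] by metis

lemma metric_proj_variational_ineq:
  fixes K :: "'a::{real_inner,complete_space} set"
  assumes "closed K" "convex K" "K \<noteq> {}" "q \<in> K"
  shows "(x - metric_proj K x) \<bullet> (q - metric_proj K x) \<le> 0"
  using exists_nearest_point[OF assms(1-3), of x] metric_proj_eqI[OF assms(2)]
    nearest_point_variational_ineq[OF assms(2) _ _ assms(4)] by metis

lemma metric_proj_subspace_orthogonal:
  fixes M :: "'a::{real_inner,complete_space} set"
  assumes "subspace M" "closed M" "v \<in> M"
  shows "(w - metric_proj M w) \<bullet> v = 0"
proof -
  have "convex M" using assms(1) by (rule subspace_imp_convex)
  have "M \<noteq> {}" using subspace_0[OF assms(1)] by blast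
  define m where "m = metric_proj M w"
  have "m \<in> M" using metric_proj_in[OF assms(2) \<open>convex M\<close> \<open>M \<noteq> {}\<close>] by (simp add: m_def)
  then have "m + v \<in> M" "m - v \<in> M" using assms(1,3) by (auto intro: subspace_add subspace_diff)
  then have "(w - m) \<bullet> ((m + v) - m) \<le> 0" "(w - m) \<bullet> ((m - v) - m) \<le> 0"
    using metric_proj_variational_ineq[OF assms(2) \<open>convex M\<close> \<open>M \<noteq> {}\<close>, of _ w, folded m_def]
    by blast+
  then show ?thesis by (simp add: m_def)
qed

section \<open>Weak convergence\<close>

lemma weakly_converges_subseq:
  assumes "weakly_converges x z" "strict_mono s"
  shows "weakly_converges (x \<circ> s) z"
  using assms LIMSEQ_subseq_LIMSEQ unfolding weakly_converges_def by (fastforce simp: o_def)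

lemma inner_tendsto_zero_if_norm:
  fixes x :: "nat \<Rightarrow> 'a::real_inner"
  assumes "(\<lambda>n. norm (x n)) \<longlonglongrightarrow> 0"
  shows "(\<lambda>n. x n \<bullet> w) \<longlonglongrightarrow> 0"
proof (rule Lim_null_comparison)
  show "\<forall>\<^sub>F n in sequentially. norm (x n \<bullet> w) \<le> norm w * norm (x n)"
    by (intro always_eventually allI) (metis Cauchy_Schwarz_ineq2 real_norm_def mult.commute)
  show "(\<lambda>n. norm w * norm (x n)) \<longlonglongrightarrow> 0"
    using tendsto_mult_left[OF assms, of "norm w"] by simp
qed

lemma weakly_converges_norm_diff:
  assumes "weakly_converges x z" "(\<lambda>n. norm (u n - x n)) \<longlonglongrightarrow> 0"
  shows "weakly_converges u z"
  unfolding weakly_converges_def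
proof
  fix w
  have "(\<lambda>n. x n \<bullet> w + (u n - x n) \<bullet> w) \<longlonglongrightarrow> z \<bullet> w + 0"
    using assms(1) inner_tendsto_zero_if_norm[OF assms(2)]
    unfolding weakly_converges_def by (intro tendsto_add) auto
  then show "(\<lambda>n. u n \<bullet> w) \<longlonglongrightarrow> z \<bullet> w" by (simp add: inner_diff_left)
qed

lemma weakly_converges_inner_tendsto:
  assumes "weakly_converges x z" "\<And>n. norm (x n) \<le> B" "y \<longlonglongrightarrow> v"
  shows "(\<lambda>n. x n \<bullet> y n) \<longlonglongrightarrow> z \<bullet> v"
proof -
  have "(\<lambda>n. x n \<bullet> (y n - v)) \<longlonglongrightarrow> 0"
  proof (rule Lim_null_comparison)
    show "\<forall>\<^sub>F n in sequentially. norm (x n \<bullet> (y n - v)) \<le> B * norm (y n - v)"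
      by (intro always_eventually allI)
        (metis Cauchy_Schwarz_ineq2 assms(2) mult_right_mono norm_ge_zero order_trans real_norm_def)
    show "(\<lambda>n. B * norm (y n - v)) \<longlonglongrightarrow> 0"
      using tendsto_mult_left[OF assms(3)[THEN LIM_zero, THEN tendsto_norm_zero], of B] by simp
  qed
  then have "(\<lambda>n. x n \<bullet> v + x n \<bullet> (y n - v)) \<longlonglongrightarrow> z \<bullet> v + 0"
    using assms(1) unfolding weakly_converges_def by (intro tendsto_add) auto
  then show ?thesis by (simp add: inner_diff_right)
qed

lemma closed_convex_weakly_closed:
  fixes K :: "'a::{real_inner,complete_space} set"
  assumes "closed K" "convex K" "\<And>n. y n \<in> K" "weakly_converges y z"
  shows "z \<in> K"
proof -
  have "K \<noteq> {}" using assms(3) by blast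
  define p where "p = metric_proj K z"
  have "(z - p) \<bullet> (y n - p) \<le> 0" for n
    unfolding p_def by (rule metric_proj_variational_ineq[OF assms(1,2) \<open>K \<noteq> {}\<close> assms(3)])
  moreover have "(\<lambda>n. (z - p) \<bullet> (y n - p)) \<longlonglongrightarrow> (z - p) \<bullet> (z - p)"
  proof -
    have "(\<lambda>n. y n \<bullet> (z - p) - p \<bullet> (z - p)) \<longlonglongrightarrow> z \<bullet> (z - p) - p \<bullet> (z - p)"
      using assms(4) unfolding weakly_converges_def by (intro tendsto_diff) auto
    then show ?thesis by (simp add: inner_diff inner_commute)
  qed
  ultimately have "(z - p) \<bullet> (z - p) \<le> 0" by (simp add: LIMSEQ_le_const2)
  then have "z = p" by (metis eq_iff_diff_eq_0 inner_eq_zero_iff inner_ge_zero order_antisym)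
  then show ?thesis using metric_proj_in[OF assms(1,2) \<open>K \<noteq> {}\<close>] by (metis p_def)
qed

text \<open>The representing vector is a suitably scaled normal to the closed hyperplane \<open>ker L\<close>.\<close>
lemma riesz_representation:
  fixes L :: "'a::{real_inner,complete_space} \<Rightarrow> real"
  assumes "bounded_linear L"
  shows "\<exists>z. \<forall>w. L w = z \<bullet> w"
proof (cases "\<forall>w. L w = 0")
  case True
  then show ?thesis by (intro exI[of _ 0]) simp
next
  case False
  then obtain w0 where "L w0 \<noteq> 0" by blast
  interpret L: bounded_linear L by fact
  define N where "N = {w. L w = 0}"
  have "subspace N" unfolding subspace_def N_def by (simp add: L.add L.scale)
  have "closed N" unfolding N_def
    by (intro closed_Collect_eq continuous_on_const linear_continuous_on assms)
  have "N \<noteq> {}" using subspace_0[OF \<open>subspace N\<close>] by blast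
  define e where "e = w0 - metric_proj N w0"
  have "L e = L w0"
    using metric_proj_in[OF \<open>closed N\<close> subspace_imp_convex[OF \<open>subspace N\<close>] \<open>N \<noteq> {}\<close>]
    by (simp add: e_def N_def L.diff)
  have "e \<bullet> e \<noteq> 0" using \<open>L e = L w0\<close> \<open>L w0 \<noteq> 0\<close> by auto
  have "e \<bullet> w = (L w / L e) * (e \<bullet> e)" for w
  proof -
    have "w - (L w / L e) *\<^sub>R e \<in> N"
      using \<open>L e = L w0\<close> \<open>L w0 \<noteq> 0\<close> by (simp add: N_def L.diff L.scale)
    then have "(w0 - metric_proj N w0) \<bullet> (w - (L w / L e) *\<^sub>R e) = 0"
      by (rule metric_proj_subspace_orthogonal[OF \<open>subspace N\<close> \<open>closed N\<close>])
    then show ?thesis by (simp add: e_def[symmetric] inner_diff_right)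
  qed
  then have "L w = ((L e / (e \<bullet> e)) *\<^sub>R e) \<bullet> w" for w
    using \<open>e \<bullet> e \<noteq> 0\<close> \<open>L e = L w0\<close> \<open>L w0 \<noteq> 0\<close> by (simp add: field_simps)
  then show ?thesis by blast
qed

lemma diagonal_subseq_inner_convergent:
  fixes y :: "nat \<Rightarrow> 'a::real_inner"
  assumes "\<And>n. norm (y n) \<le> B"
  shows "\<exists>s. strict_mono s \<and> (\<forall>k. convergent (\<lambda>i. y (s i) \<bullet> y k))"
proof -
  define P where "P = (\<lambda>k (s::nat\<Rightarrow>nat). convergent (\<lambda>i. y (s i) \<bullet> y k))"
  interpret subseqs P
  proof
    fix k and s :: "nat \<Rightarrow> nat"
    have "\<bar>y (s i) \<bullet> y k\<bar> \<le> B * B" for i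
      using Cauchy_Schwarz_ineq2[of "y (s i)" "y k"] assms
      by (smt (verit, best) mult_mono norm_ge_zero)
    then have "bounded (range (\<lambda>i. y (s i) \<bullet> y k))" by (auto simp: bounded_iff)
    then obtain l r where "strict_mono r" "((\<lambda>i. y (s i) \<bullet> y k) \<circ> r) \<longlonglongrightarrow> l"
      using bounded_imp_convergent_subsequence by blast
    then show "\<exists>r. strict_mono r \<and> P k (s \<circ> r)" by (auto simp: P_def o_def convergent_def)
  qed
  have "convergent (\<lambda>i. y (diagseq i) \<bullet> y k)" for k
  proof -
    have "P k (diagseq \<circ> ((+) (Suc k)))"
      by (rule diagseq_holds) (auto simp: P_def o_def intro: convergent_subseq_convergent[unfolded o_def])
    then obtain l where "(\<lambda>i. y (diagseq (i + Suc k)) \<bullet> y k) \<longlonglongrightarrow> l"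
      by (auto simp: P_def o_def add.commute convergent_def)
    then show ?thesis
      using LIMSEQ_offset[of "\<lambda>i. y (diagseq i) \<bullet> y k" "Suc k" l] unfolding convergent_def by blast
  qed
  then show ?thesis using subseq_diagseq by blast
qed

lemma closed_inner_convergent:
  fixes Y :: "nat \<Rightarrow> 'a::real_inner"
  assumes "\<And>i. norm (Y i) \<le> B"
  shows "closed {w. convergent (\<lambda>i. Y i \<bullet> w)}"
  unfolding closed_sequential_limits
proof (intro allI impI, elim conjE)
  fix wk :: "nat \<Rightarrow> 'a" and w
  assume wk: "\<forall>n. wk n \<in> {w. convergent (\<lambda>i. Y i \<bullet> w)}" "wk \<longlonglongrightarrow> w"
  have "B \<ge> 0" using assms[of 0] norm_ge_zero order_trans by blast
  have "Cauchy (\<lambda>i. Y i \<bullet> w)"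
  proof (rule metric_CauchyI)
    fix e :: real assume "e > 0"
    define d where "d = e / (3 * (B + 1))"
    have "d > 0" using \<open>e > 0\<close> \<open>B \<ge> 0\<close> by (simp add: d_def)
    obtain k where k: "norm (wk k - w) < d"
      using wk(2) \<open>d > 0\<close> unfolding LIMSEQ_iff by (metis order_refl)
    have "Cauchy (\<lambda>i. Y i \<bullet> wk k)" using wk(1) by (simp add: Cauchy_convergent_iff)
    then obtain N where N: "\<And>i j. i \<ge> N \<Longrightarrow> j \<ge> N \<Longrightarrow> dist (Y i \<bullet> wk k) (Y j \<bullet> wk k) < e / 3"
      using \<open>e > 0\<close> unfolding Cauchy_def by (metis zero_less_divide_iff zero_less_numeral)
    have close: "\<bar>Y i \<bullet> w - Y i \<bullet> wk k\<bar> \<le> e / 3" for i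
    proof -
      have "\<bar>Y i \<bullet> w - Y i \<bullet> wk k\<bar> \<le> norm (Y i) * norm (wk k - w)"
        using Cauchy_Schwarz_ineq2[of "Y i" "wk k - w"] by (simp add: inner_diff_right)
      also have "\<dots> \<le> (B + 1) * d" using assms[of i] k \<open>B \<ge> 0\<close> by (intro mult_mono) auto
      also have "\<dots> = e / 3" using \<open>B \<ge> 0\<close> by (simp add: d_def field_simps)
      finally show ?thesis .
    qed
    have "dist (Y i \<bullet> w) (Y j \<bullet> w) < e" if "i \<ge> N" "j \<ge> N" for i j
      using N[OF that] close[of i] close[of j] unfolding dist_real_def by linarith
    then show "\<exists>M. \<forall>i\<ge>M. \<forall>j\<ge>M. dist (Y i \<bullet> w) (Y j \<bullet> w) < e" by blast
  qed
  then show "w \<in> {w. convergent (\<lambda>i. Y i \<bullet> w)}" by (simp add: Cauchy_convergent_iff)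
qed

lemma weakly_convergent_if_inner_convergent:
  fixes y :: "nat \<Rightarrow> 'a::{real_inner,complete_space}"
  assumes bound: "\<And>n. norm (y n) \<le> B" and conv: "\<And>w. convergent (\<lambda>n. y n \<bullet> w)"
  shows "\<exists>z. weakly_converges y z"
proof -
  define L where "L w = lim (\<lambda>n. y n \<bullet> w)" for w
  have L: "(\<lambda>n. y n \<bullet> w) \<longlonglongrightarrow> L w" for w
    using conv[of w] by (simp add: L_def convergent_LIMSEQ_iff)
  have "bounded_linear L"
  proof (rule bounded_linear_intro)
    show "L (a + b) = L a + L b" for a b
      using tendsto_add[OF L[of a] L[of b]] L[of "a + b"] by (simp add: inner_add_right LIMSEQ_unique)
    show "L (c *\<^sub>R a) = c *\<^sub>R L a" for c a
      using tendsto_mult_left[OF L[of a], of c] L[of "c *\<^sub>R a"] by (simp add: LIMSEQ_unique)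
    show "norm (L w) \<le> norm w * B" for w
    proof (rule LIMSEQ_le_const2[OF tendsto_norm[OF L[of w]]], intro exI allI impI)
      fix n
      show "norm (y n \<bullet> w) \<le> norm w * B"
        using Cauchy_Schwarz_ineq2[of "y n" w] bound[of n]
        by (smt (verit, best) mult.commute mult_left_mono norm_ge_zero real_norm_def)
    qed
  qed
  then obtain z where "\<And>w. L w = z \<bullet> w" using riesz_representation by blast
  then show ?thesis using L by (auto simp: weakly_converges_def)
qed

text \<open>Inner products against the closed span of the sequence converge along the diagonal subsequence;
  against its orthogonal complement they vanish.\<close>
lemma bounded_imp_weakly_convergent_subseq:
  fixes y :: "nat \<Rightarrow> 'a::{real_inner,complete_space}"
  assumes bound: "\<And>n. norm (y n) \<le> B"
  shows "\<exists>s z. strict_mono s \<and> weakly_converges (y \<circ> s) z"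
proof -
  obtain s where "strict_mono s" and conv_y: "\<And>k. convergent (\<lambda>i. y (s i) \<bullet> y k)"
    using diagonal_subseq_inner_convergent[of y B] bound by blast
  define C where "C = {w. convergent (\<lambda>i. y (s i) \<bullet> w)}"
  have "subspace C" unfolding subspace_def C_def
    by (auto simp: inner_add_right intro!: convergent_add convergent_mult convergent_const)
  have "closed C" unfolding C_def using bound by (rule closed_inner_convergent)
  have "C \<noteq> {}" using subspace_0[OF \<open>subspace C\<close>] by blast
  have "convergent (\<lambda>i. y (s i) \<bullet> w)" for w
  proof -
    define m where "m = metric_proj C w"
    have "m \<in> C"
      using metric_proj_in[OF \<open>closed C\<close> subspace_imp_convex[OF \<open>subspace C\<close>] \<open>C \<noteq> {}\<close>]
      by (simp add: m_def)
    have "(w - m) \<bullet> y (s i) = 0" for i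
      unfolding m_def using conv_y
      by (intro metric_proj_subspace_orthogonal[OF \<open>subspace C\<close> \<open>closed C\<close>]) (simp add: C_def)
    then have "y (s i) \<bullet> w = y (s i) \<bullet> m" for i by (simp add: inner_diff inner_commute)
    then show ?thesis using \<open>m \<in> C\<close> by (simp add: C_def)
  qed
  then obtain z where "weakly_converges (y \<circ> s) z"
    using weakly_convergent_if_inner_convergent[of "y \<circ> s" B] bound by auto
  then show ?thesis using \<open>strict_mono s\<close> by blast
qed

lemma weakly_converges_if_subseq_limits_eq:
  fixes x :: "nat \<Rightarrow> 'a::{real_inner,complete_space}"
  assumes bound: "\<And>n. norm (x n) \<le> B"
    and limits: "\<And>s z. strict_mono s \<Longrightarrow> weakly_converges (x \<circ> s) z \<Longrightarrow> z = v"
  shows "weakly_converges x v"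
  unfolding weakly_converges_def
proof (rule allI, rule ccontr)
  fix w
  assume "\<not> (\<lambda>n. x n \<bullet> w) \<longlonglongrightarrow> v \<bullet> w"
  then obtain e where "e > 0" and "\<forall>N. \<exists>n\<ge>N. e \<le> \<bar>x n \<bullet> w - v \<bullet> w\<bar>"
    unfolding LIMSEQ_def dist_real_def by (meson not_le)
  then have inf: "infinite {n. e \<le> \<bar>x n \<bullet> w - v \<bullet> w\<bar>}" by (simp add: infinite_nat_iff_unbounded_le)
  define s where "s = enumerate {n. e \<le> \<bar>x n \<bullet> w - v \<bullet> w\<bar>}"
  have "strict_mono s" and far: "\<And>i. e \<le> \<bar>x (s i) \<bullet> w - v \<bullet> w\<bar>"
    using strict_mono_enumerate[OF inf] enumerate_in_set[OF inf] by (simp_all add: s_def)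
  obtain t z where "strict_mono t" and wk: "weakly_converges ((x \<circ> s) \<circ> t) z"
    using bounded_imp_weakly_convergent_subseq[of "x \<circ> s" B] bound by auto
  have "z = v" using limits[OF strict_mono_o[OF \<open>strict_mono s\<close> \<open>strict_mono t\<close>]] wk
    by (simp add: o_assoc)
  then have "(\<lambda>i. x (s (t i)) \<bullet> w) \<longlonglongrightarrow> v \<bullet> w" using wk by (simp add: weakly_converges_def)
  then obtain i where "dist (x (s (t i)) \<bullet> w) (v \<bullet> w) < e"
    using \<open>e > 0\<close> by (metis LIMSEQ_def order_refl)
  then show False using far[of "t i"] by (simp add: dist_real_def)
qed

section \<open>Fejer monotone sequences\<close>

lemma fejer_norm_mono:
  fixes x :: "nat \<Rightarrow> 'a::real_normed_vector"
  assumes "\<And>n. norm (x (Suc n) - p) \<le> norm (x n - p)" "n \<le> m"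
  shows "norm (x m - p) \<le> norm (x n - p)"
  using assms(2)
proof (induction m rule: dec_induct)
  case (step m)
  then show ?case using assms(1)[of m] by linarith
qed simp

lemma fejer_bounded:
  fixes x :: "nat \<Rightarrow> 'a::real_normed_vector"
  assumes "\<And>n. norm (x (Suc n) - p) \<le> norm (x n - p)"
  shows "norm (x n) \<le> norm (x 0 - p) + norm p"
  using fejer_norm_mono[of x p 0 n] assms norm_triangle_sub[of "x n" p] by simp

lemma fejer_metric_proj_sq_dist:
  fixes F :: "'a::{real_inner,complete_space} set"
  assumes F: "closed F" "convex F" "F \<noteq> {}"
    and fejer: "\<And>p n. p \<in> F \<Longrightarrow> norm (x (Suc n) - p) \<le> norm (x n - p)"
    and "n \<le> m"
  shows "(norm (metric_proj F (x m) - metric_proj F (x n)))\<^sup>2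
    \<le> (norm (x n - metric_proj F (x n)))\<^sup>2 - (norm (x m - metric_proj F (x m)))\<^sup>2"
proof -
  have PF: "metric_proj F (x n) \<in> F" by (rule metric_proj_in[OF F])
  have "(norm (x m - metric_proj F (x m)))\<^sup>2 + (norm (metric_proj F (x m) - metric_proj F (x n)))\<^sup>2
      \<le> (norm (x m - metric_proj F (x n)))\<^sup>2"
    by (rule variational_ineq_sq_dist[OF metric_proj_variational_ineq[OF F PF]])
  moreover have "norm (x m - metric_proj F (x n)) \<le> norm (x n - metric_proj F (x n))"
    using fejer_norm_mono[of x "metric_proj F (x n)", OF fejer[OF PF] \<open>n \<le> m\<close>] .
  then have "(norm (x m - metric_proj F (x n)))\<^sup>2 \<le> (norm (x n - metric_proj F (x n)))\<^sup>2"
    by (simp add: power_mono)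
  ultimately show ?thesis by linarith
qed

text \<open>Takahashi and Toyoda: the distances \<open>d n = \<parallel>x n - P x n\<parallel>\<^sup>2\<close> decrease, and their
  differences control \<open>\<parallel>P x m - P x n\<parallel>\<^sup>2\<close>, so the projections form a Cauchy sequence.\<close>
lemma fejer_metric_proj_convergent:
  fixes F :: "'a::{real_inner,complete_space} set"
  assumes F: "closed F" "convex F" "F \<noteq> {}"
    and fejer: "\<And>p n. p \<in> F \<Longrightarrow> norm (x (Suc n) - p) \<le> norm (x n - p)"
  shows "\<exists>v\<in>F. (\<lambda>n. metric_proj F (x n)) \<longlonglongrightarrow> v"
proof -
  define P where "P n = metric_proj F (x n)" for n
  define d where "d n = (norm (x n - P n))\<^sup>2" for n
  have key: "(norm (P m - P n))\<^sup>2 \<le> d n - d m" if "n \<le> m" for m n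
    unfolding P_def d_def using fejer_metric_proj_sq_dist[of F x, OF F fejer that] .
  have "d m \<le> d n" if "n \<le> m" for m n
    using key[OF that] zero_le_power2[of "norm (P m - P n)"] by linarith
  then have "decseq d" by (simp add: decseq_def)
  then obtain L where "d \<longlonglongrightarrow> L" using decseq_convergent[of d 0] by (auto simp: d_def)
  then have "Cauchy d" by (rule LIMSEQ_imp_Cauchy)
  have "Cauchy P"
  proof (rule metric_CauchyI)
    fix e :: real assume "e > 0"
    then obtain N where N: "\<And>m n. m \<ge> N \<Longrightarrow> n \<ge> N \<Longrightarrow> dist (d m) (d n) < e\<^sup>2"
      using \<open>Cauchy d\<close> unfolding Cauchy_def by (meson zero_less_power)
    have "dist (P m) (P n) < e" if "m \<ge> N" "n \<ge> N" for m n
    proof -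
      have "(norm (P m - P n))\<^sup>2 < e\<^sup>2"
      proof (cases "n \<le> m")
        case True
        then show ?thesis using key[OF True] N[OF that] by (simp add: dist_real_def)
      next
        case False
        then show ?thesis using key[of m n] N[OF that] by (simp add: dist_real_def norm_minus_commute)
      qed
      then show ?thesis using \<open>e > 0\<close> by (simp add: dist_norm power_less_imp_less_base)
    qed
    then show "\<exists>M. \<forall>m\<ge>M. \<forall>n\<ge>M. dist (P m) (P n) < e" by blast
  qed
  then obtain v where "P \<longlonglongrightarrow> v" by (auto simp: Cauchy_convergent_iff convergent_def)
  moreover have "v \<in> F"
    using closed_sequentially[OF F(1), of P] metric_proj_in[OF F] \<open>P \<longlonglongrightarrow> v\<close> by (simp add: P_def)
  ultimately show ?thesis by (auto simp: P_def[abs_def])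
qed

text \<open>Opial's argument; a weak cluster point \<open>z\<close> is identified with \<open>v\<close> by passing to the limit in
  \<open>\<langle>x n - P x n, z - P x n\<rangle> \<le> 0\<close>.\<close>
lemma fejer_weakly_convergent:
  fixes F :: "'a::{real_inner,complete_space} set"
  assumes F: "closed F" "convex F" "F \<noteq> {}"
    and fejer: "\<And>p n. p \<in> F \<Longrightarrow> norm (x (Suc n) - p) \<le> norm (x n - p)"
    and cluster: "\<And>s z. strict_mono s \<Longrightarrow> weakly_converges (x \<circ> s) z \<Longrightarrow> z \<in> F"
  shows "\<exists>v\<in>F. weakly_converges x v \<and> (\<lambda>n. metric_proj F (x n)) \<longlonglongrightarrow> v"
proof -
  obtain v where "v \<in> F" and proj: "(\<lambda>n. metric_proj F (x n)) \<longlonglongrightarrow> v"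
    using fejer_metric_proj_convergent[of F x, OF F fejer] by blast
  obtain p where "p \<in> F" using F(3) by blast
  define B where "B = norm (x 0 - p) + norm p"
  have bound: "norm (x n) \<le> B" for n
    using fejer_bounded[of x p n] fejer[OF \<open>p \<in> F\<close>] by (simp add: B_def)
  have "z = v" if "strict_mono s" "weakly_converges (x \<circ> s) z" for s z
  proof -
    define P where "P i = metric_proj F (x (s i))" for i
    have "P \<longlonglongrightarrow> v"
      using LIMSEQ_subseq_LIMSEQ[OF proj \<open>strict_mono s\<close>] by (simp add: P_def[abs_def] o_def)
    have "z \<in> F" using cluster[OF that] .
    have "(x (s i) - P i) \<bullet> (z - P i) \<le> 0" for i
      unfolding P_def by (rule metric_proj_variational_ineq[OF F \<open>z \<in> F\<close>])
    moreover have "(\<lambda>i. (x (s i) - P i) \<bullet> (z - P i)) \<longlonglongrightarrow> (z - v) \<bullet> (z - v)"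
    proof -
      have "(\<lambda>i. (x \<circ> s) i \<bullet> (z - P i)) \<longlonglongrightarrow> z \<bullet> (z - v)"
        using bound \<open>P \<longlonglongrightarrow> v\<close>
        by (intro weakly_converges_inner_tendsto[OF that(2), of B] tendsto_intros) auto
      moreover have "(\<lambda>i. P i \<bullet> (z - P i)) \<longlonglongrightarrow> v \<bullet> (z - v)"
        by (intro tendsto_intros \<open>P \<longlonglongrightarrow> v\<close>)
      ultimately show ?thesis by (simp add: inner_diff_left tendsto_diff)
    qed
    ultimately have "(z - v) \<bullet> (z - v) \<le> 0" by (simp add: LIMSEQ_le_const2)
    then show "z = v" by (metis eq_iff_diff_eq_0 inner_eq_zero_iff inner_ge_zero order_antisym)
  qed
  then have "weakly_converges x v" by (intro weakly_converges_if_subseq_limits_eq[OF bound])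
  with \<open>v \<in> F\<close> proj show ?thesis by blast
qed

section \<open>Generalized hybrid mappings\<close>

lemma generalized_hybrid_self_map:
  "generalized_hybrid E lam gam S \<Longrightarrow> x \<in> E \<Longrightarrow> S x \<in> E"
  unfolding generalized_hybrid_def by blast

text \<open>With a fixed point as first argument, \<open>lam\<close> and \<open>gam\<close> cancel out of the defining inequality.\<close>
lemma generalized_hybrid_quasi_nonexpansive:
  assumes "generalized_hybrid E lam gam S" "w \<in> E" "p \<in> fixset E S"
  shows "norm (S w - p) \<le> norm (w - p)"
proof -
  have "p \<in> E" "S p = p" using assms(3) by (auto simp: fixset_def)
  have "lam * (norm (S p - S w))\<^sup>2 + (1 - lam) * (norm (p - S w))\<^sup>2
     \<le> gam * (norm (S p - w))\<^sup>2 + (1 - gam) * (norm (p - w))\<^sup>2"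
    using assms(1) \<open>p \<in> E\<close> assms(2) unfolding generalized_hybrid_def by blast
  then have "(norm (p - S w))\<^sup>2 \<le> (norm (p - w))\<^sup>2" using \<open>S p = p\<close> by (simp add: algebra_simps)
  then have "norm (p - S w) \<le> norm (p - w)" by (rule power2_le_imp_le) simp
  then show ?thesis by (simp add: norm_minus_commute)
qed

lemma generalized_hybrid_fixset_closed:
  fixes E :: "'a::real_inner set"
  assumes "generalized_hybrid E lam gam S" "closed E"
  shows "closed (fixset E S)"
  unfolding closed_sequential_limits
proof (intro allI impI, elim conjE)
  fix q :: "nat \<Rightarrow> 'a" and p
  assume q: "\<forall>n. q n \<in> fixset E S" "q \<longlonglongrightarrow> p"
  have "p \<in> E" using closed_sequentially[OF assms(2), of q p] q by (auto simp: fixset_def)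
  have "(\<lambda>n. q n - S p) \<longlonglongrightarrow> 0"
  proof (rule Lim_null_comparison)
    have "norm (S p - q n) \<le> norm (p - q n)" for n
      using generalized_hybrid_quasi_nonexpansive[OF assms(1) \<open>p \<in> E\<close> q(1)[rule_format]] .
    then show "\<forall>\<^sub>F n in sequentially. norm (q n - S p) \<le> norm (q n - p)"
      by (simp add: norm_minus_commute)
    show "(\<lambda>n. norm (q n - p)) \<longlonglongrightarrow> 0" using q(2) by (simp add: LIM_zero tendsto_norm_zero)
  qed
  then have "q \<longlonglongrightarrow> S p" by (rule LIM_zero_cancel)
  then have "S p = p" using q(2) by (rule LIMSEQ_unique)
  with \<open>p \<in> E\<close> show "p \<in> fixset E S" by (simp add: fixset_def)
qed

lemma generalized_hybrid_fixset_convex: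
  fixes E :: "'a::real_inner set"
  assumes "generalized_hybrid E lam gam S" "convex E"
  shows "convex (fixset E S)"
proof (rule convexI)
  fix p1 p2 and t1 t :: real
  assume p: "p1 \<in> fixset E S" "p2 \<in> fixset E S" and t: "0 \<le> t1" "0 \<le> t" "t1 + t = 1"
  define p where "p = (1 - t) *\<^sub>R p1 + t *\<^sub>R p2"
  have "p \<in> E" using assms(2) p t by (auto simp: p_def fixset_def convex_def)
  have "(norm (S p - p))\<^sup>2 = (norm ((1 - t) *\<^sub>R (S p - p1) + t *\<^sub>R (S p - p2)))\<^sup>2"
    by (simp add: p_def algebra_simps)
  also have "\<dots> = (1 - t) * (norm (S p - p1))\<^sup>2 + t * (norm (S p - p2))\<^sup>2 - t * (1 - t) * (norm (p2 - p1))\<^sup>2"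
    by (subst norm_convex_combination_sq) simp
  also have "\<dots> \<le> (1 - t) * (norm (p - p1))\<^sup>2 + t * (norm (p - p2))\<^sup>2 - t * (1 - t) * (norm (p2 - p1))\<^sup>2"
    using generalized_hybrid_quasi_nonexpansive[OF assms(1) \<open>p \<in> E\<close> p(1)]
      generalized_hybrid_quasi_nonexpansive[OF assms(1) \<open>p \<in> E\<close> p(2)] t
    by (intro diff_right_mono add_mono mult_left_mono power_mono) auto
  also have "\<dots> = (norm ((1 - t) *\<^sub>R (p - p1) + t *\<^sub>R (p - p2)))\<^sup>2"
    by (subst norm_convex_combination_sq) simp
  also have "\<dots> = 0" by (simp add: p_def algebra_simps)
  finally have "S p = p" by simp
  moreover have "t1 = 1 - t" using t(3) by simp
  ultimately show "t1 *\<^sub>R p1 + t *\<^sub>R p2 \<in> fixset E S" using \<open>p \<in> E\<close> by (simp add: fixset_def p_def)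
qed

text \<open>The defining inequality at \<open>(w, z)\<close>, expanded around \<open>w - z\<close>: along an approximate fixed point
  sequence converging weakly to \<open>z\<close>, every term except \<open>\<parallel>z - S z\<parallel>\<^sup>2\<close> tends to \<open>0\<close>.\<close>
lemma generalized_hybrid_expanded:
  fixes E :: "'a::real_inner set"
  assumes "generalized_hybrid E lam gam S" "w \<in> E" "z \<in> E"
  shows "2 * ((w - z) \<bullet> (z - S z)) + (norm (z - S z))\<^sup>2 \<le>
    gam * (2 * ((w - z) \<bullet> (S w - w)) + (norm (S w - w))\<^sup>2)
    - lam * (2 * ((w - z) \<bullet> (S w - w)) + 2 * ((z - S z) \<bullet> (S w - w)) + (norm (S w - w))\<^sup>2)"
proof -
  define a where "a = w - z"
  define d where "d = z - S z"
  define e where "e = S w - w"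
  have "lam * (norm (S w - S z))\<^sup>2 + (1 - lam) * (norm (w - S z))\<^sup>2
     \<le> gam * (norm (S w - z))\<^sup>2 + (1 - gam) * (norm (w - z))\<^sup>2"
    using assms unfolding generalized_hybrid_def by blast
  moreover have "S w - S z = (a + d) + e" "w - S z = a + d" "S w - z = a + e" "w - z = a"
    by (simp_all add: a_def d_def e_def algebra_simps)
  ultimately have "lam * (norm ((a + d) + e))\<^sup>2 + (1 - lam) * (norm (a + d))\<^sup>2
     \<le> gam * (norm (a + e))\<^sup>2 + (1 - gam) * (norm a)\<^sup>2"
    by (simp only:)
  then have "lam * ((norm (a + d))\<^sup>2 + 2 * ((a + d) \<bullet> e) + (norm e)\<^sup>2) + (1 - lam) * (norm (a + d))\<^sup>2
     \<le> gam * ((norm a)\<^sup>2 + 2 * (a \<bullet> e) + (norm e)\<^sup>2) + (1 - gam) * (norm a)\<^sup>2"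
    by (simp only: norm_add_sq[of "a + d" e] norm_add_sq[of a e])
  moreover have "(norm (a + d))\<^sup>2 = (norm a)\<^sup>2 + 2 * (a \<bullet> d) + (norm d)\<^sup>2"
    by (rule norm_add_sq)
  ultimately show ?thesis
    unfolding a_def[symmetric] d_def[symmetric] e_def[symmetric] by (simp add: inner_add_left algebra_simps)
qed

lemma generalized_hybrid_demiclosed:
  fixes E :: "'a::real_inner set"
  assumes gh: "generalized_hybrid E lam gam S" and "\<And>i. U i \<in> E" "z \<in> E"
    and bound: "\<And>i. norm (U i - z) \<le> M"
    and wk: "weakly_converges U z"
    and null: "(\<lambda>i. S (U i) - U i) \<longlonglongrightarrow> 0"
  shows "S z = z"
proof -
  define e where "e i = S (U i) - U i" for i
  define a where "a i = U i - z" for i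
  define d where "d = z - S z"
  have ineq: "2 * (a i \<bullet> d) + (norm d)\<^sup>2 \<le>
      gam * (2 * (a i \<bullet> e i) + (norm (e i))\<^sup>2) - lam * (2 * (a i \<bullet> e i) + 2 * (d \<bullet> e i) + (norm (e i))\<^sup>2)" for i
    unfolding a_def d_def e_def by (rule generalized_hybrid_expanded[OF gh assms(2) assms(3)])
  have "(\<lambda>i. norm (e i)) \<longlonglongrightarrow> 0" using null by (simp add: e_def tendsto_norm_zero)
  have lim_ad: "(\<lambda>i. a i \<bullet> d) \<longlonglongrightarrow> 0"
  proof -
    have "(\<lambda>i. U i \<bullet> d - z \<bullet> d) \<longlonglongrightarrow> z \<bullet> d - z \<bullet> d"
      using wk unfolding weakly_converges_def by (intro tendsto_diff) auto
    then show ?thesis by (simp add: a_def inner_diff_left)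
  qed
  have lim_ae: "(\<lambda>i. a i \<bullet> e i) \<longlonglongrightarrow> 0"
  proof (rule Lim_null_comparison)
    show "\<forall>\<^sub>F i in sequentially. norm (a i \<bullet> e i) \<le> M * norm (e i)"
    proof (intro always_eventually allI)
      fix i
      have "\<bar>a i \<bullet> e i\<bar> \<le> norm (a i) * norm (e i)" by (rule Cauchy_Schwarz_ineq2)
      also have "\<dots> \<le> M * norm (e i)" using bound[of i] by (simp add: a_def mult_right_mono)
      finally show "norm (a i \<bullet> e i) \<le> M * norm (e i)" by simp
    qed
    show "(\<lambda>i. M * norm (e i)) \<longlonglongrightarrow> 0"
      using tendsto_mult_left[OF \<open>(\<lambda>i. norm (e i)) \<longlonglongrightarrow> 0\<close>, of M] by simp
  qed
  have lim_de: "(\<lambda>i. d \<bullet> e i) \<longlonglongrightarrow> 0"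
    using inner_tendsto_zero_if_norm[OF \<open>(\<lambda>i. norm (e i)) \<longlonglongrightarrow> 0\<close>, of d] by (simp add: inner_commute)
  have "(\<lambda>i. 2 * (a i \<bullet> d) + (norm d)\<^sup>2) \<longlonglongrightarrow> 2 * 0 + (norm d)\<^sup>2"
    by (intro tendsto_intros lim_ad)
  moreover have "(\<lambda>i. gam * (2 * (a i \<bullet> e i) + (norm (e i))\<^sup>2) - lam * (2 * (a i \<bullet> e i) + 2 * (d \<bullet> e i) + (norm (e i))\<^sup>2))
      \<longlonglongrightarrow> gam * (2 * 0 + 0\<^sup>2) - lam * (2 * 0 + 2 * 0 + 0\<^sup>2)"
    by (intro tendsto_intros lim_ae lim_de \<open>(\<lambda>i. norm (e i)) \<longlonglongrightarrow> 0\<close>)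
  ultimately have "2 * 0 + (norm d)\<^sup>2 \<le> gam * (2 * 0 + 0\<^sup>2) - lam * (2 * 0 + 2 * 0 + 0\<^sup>2)"
    by (rule LIMSEQ_le) (use ineq in blast)
  then have "(norm d)\<^sup>2 \<le> 0" by simp
  then show ?thesis by (simp add: d_def)
qed

section \<open>Equilibrium problems\<close>

lemma bifunction_conditionsD:
  assumes "bifunction_conditions E f"
  shows "x \<in> E \<Longrightarrow> f x x = 0"
    and "x \<in> E \<Longrightarrow> y \<in> E \<Longrightarrow> f x y + f y x \<le> 0"
    and "x \<in> E \<Longrightarrow> y \<in> E \<Longrightarrow> z \<in> E \<Longrightarrow>
      Limsup (at_right 0) (\<lambda>t::real. ereal (f (t *\<^sub>R z + (1 - t) *\<^sub>R x) y)) \<le> ereal (f x y)"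
    and "x \<in> E \<Longrightarrow> convex_on E (f x)"
    and "x \<in> E \<Longrightarrow> lsc_on E (f x)"
  using assms unfolding bifunction_conditions_def by blast+

text \<open>Minty's lemma: (A1), (A4) and the dual inequality give \<open>f (z + t (y - z)) y \<ge> 0\<close> for \<open>0 < t < 1\<close>,
  and (A3) passes to \<open>t \<rightarrow> 0\<close>.\<close>
lemma EP_if_dual:
  assumes bc: "bifunction_conditions E f" and "convex E" "z \<in> E"
    and dual: "\<And>y. y \<in> E \<Longrightarrow> f y z \<le> 0"
  shows "z \<in> EP E f"
proof -
  have "f z y \<ge> 0" if "y \<in> E" for y
  proof -
    have pos: "f (t *\<^sub>R y + (1 - t) *\<^sub>R z) y \<ge> 0" if t: "0 < t" "t < 1" for t
    proof -
      define w where "w = (1 - t) *\<^sub>R z + t *\<^sub>R y"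
      have "w \<in> E" using \<open>convex E\<close> \<open>z \<in> E\<close> \<open>y \<in> E\<close> t by (simp add: w_def convex_def)
      have "0 = f w w" using bifunction_conditionsD(1)[OF bc \<open>w \<in> E\<close>] by simp
      also have "\<dots> \<le> (1 - t) * f w z + t * f w y"
        using convex_onD[OF bifunction_conditionsD(4)[OF bc \<open>w \<in> E\<close>]] t \<open>z \<in> E\<close> \<open>y \<in> E\<close>
        by (simp add: w_def)
      also have "\<dots> \<le> t * f w y"
        using dual[OF \<open>w \<in> E\<close>] t by (simp add: mult_nonneg_nonpos)
      finally show ?thesis using t by (simp add: w_def add.commute zero_le_mult_iff)
    qed
    have "\<forall>\<^sub>F t in at_right 0. ereal 0 \<le> ereal (f (t *\<^sub>R y + (1 - t) *\<^sub>R z) y)"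
      using eventually_at_right_real[of 0 1] by (rule eventually_mono) (use pos in auto)
    then have "ereal 0 \<le> Liminf (at_right 0) (\<lambda>t::real. ereal (f (t *\<^sub>R y + (1 - t) *\<^sub>R z) y))"
      by (rule Liminf_bounded)
    also have "\<dots> \<le> Limsup (at_right 0) (\<lambda>t::real. ereal (f (t *\<^sub>R y + (1 - t) *\<^sub>R z) y))"
      by (rule Liminf_le_Limsup) simp
    also have "\<dots> \<le> ereal (f z y)" using bifunction_conditionsD(3)[OF bc \<open>z \<in> E\<close> that that] .
    finally show ?thesis by simp
  qed
  with \<open>z \<in> E\<close> show ?thesis by (simp add: EP_def)
qed

lemma EP_eq_dual:
  assumes "bifunction_conditions E f" "convex E"
  shows "EP E f = {z\<in>E. \<forall>y\<in>E. f y z \<le> 0}"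
proof
  show "EP E f \<subseteq> {z\<in>E. \<forall>y\<in>E. f y z \<le> 0}"
    using bifunction_conditionsD(2)[OF assms(1)] unfolding EP_def by (fastforce simp: add.commute)
  show "{z\<in>E. \<forall>y\<in>E. f y z \<le> 0} \<subseteq> EP E f"
    using EP_if_dual[OF assms] by blast
qed

lemma lsc_on_closed_sublevel:
  fixes g :: "'a::metric_space \<Rightarrow> real"
  assumes "closed E" "lsc_on E g"
  shows "closed {z\<in>E. g z \<le> c}"
  unfolding closed_sequential_limits
proof (intro allI impI, elim conjE)
  fix w :: "nat \<Rightarrow> 'a" and l
  assume w: "\<forall>n. w n \<in> {z\<in>E. g z \<le> c}" "w \<longlonglongrightarrow> l"
  have "l \<in> E" using closed_sequentially[OF assms(1)] w by auto
  have "g l \<le> c"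
  proof (rule ccontr)
    assume "\<not> g l \<le> c"
    then have "\<forall>\<^sub>F z in at l within E. c < g z" using assms(2) \<open>l \<in> E\<close> unfolding lsc_on_def by auto
    then obtain \<delta> where "\<delta> > 0" and near: "\<And>z. z \<in> E \<Longrightarrow> z \<noteq> l \<Longrightarrow> dist z l < \<delta> \<Longrightarrow> c < g z"
      unfolding eventually_at by metis
    obtain n where "dist (w n) l < \<delta>" using w(2) \<open>\<delta> > 0\<close> unfolding LIMSEQ_def by blast
    then show False using near[of "w n"] w(1)[rule_format, of n] \<open>\<not> g l \<le> c\<close> by (cases "w n = l") auto
  qed
  with \<open>l \<in> E\<close> show "l \<in> {z\<in>E. g z \<le> c}" by simp
qed

lemma convex_on_sublevel_convex:
  assumes "convex_on E g"
  shows "convex {z\<in>E. g z \<le> c}"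
proof (rule convexI)
  fix a b and s t :: real
  assume ab: "a \<in> {z\<in>E. g z \<le> c}" "b \<in> {z\<in>E. g z \<le> c}" and st: "0 \<le> s" "0 \<le> t" "s + t = 1"
  have "convex E" using assms by (rule convex_on_imp_convex)
  then have "s *\<^sub>R a + t *\<^sub>R b \<in> E" using ab st by (auto simp: convex_def)
  moreover have "g (s *\<^sub>R a + t *\<^sub>R b) \<le> s * g a + t * g b"
    using assms ab st unfolding convex_on_def by auto
  moreover have "s * g a + t * g b \<le> s * c + t * c" using ab st by (auto intro!: add_mono mult_left_mono)
  ultimately show "s *\<^sub>R a + t *\<^sub>R b \<in> {z\<in>E. g z \<le> c}" using st(3) by (simp add: distrib_right[symmetric])
qed

lemma EP_eq_Inter_sublevels:
  assumes "bifunction_conditions E f" "convex E"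
  shows "EP E f = E \<inter> (\<Inter>y\<in>E. {z\<in>E. f y z \<le> 0})"
  using EP_eq_dual[OF assms] by auto

lemma EP_closed:
  fixes E :: "'a::real_inner set"
  assumes "bifunction_conditions E f" "convex E" "closed E"
  shows "closed (EP E f)"
  unfolding EP_eq_Inter_sublevels[OF assms(1,2)]
  using assms(3) lsc_on_closed_sublevel[OF assms(3) bifunction_conditionsD(5)[OF assms(1)]]
  by (intro closed_Int closed_INT) auto

lemma EP_convex:
  fixes E :: "'a::real_inner set"
  assumes "bifunction_conditions E f" "convex E"
  shows "convex (EP E f)"
  unfolding EP_eq_Inter_sublevels[OF assms]
  using assms(2) convex_on_sublevel_convex[OF bifunction_conditionsD(4)[OF assms(1)]]
  by (intro convex_Int convex_INT) auto

text \<open>Monotonicity (A2) kills the bifunction terms and leaves \<open>\<langle>p - u, u - x\<rangle> \<ge> 0\<close>.\<close>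
lemma resolvent_sq_dist:
  assumes "bifunction_conditions E f" "r > 0" "u \<in> E"
    and res: "\<And>z. z \<in> E \<Longrightarrow> f u z + (1 / r) * ((z - u) \<bullet> (u - x)) \<ge> 0"
    and "p \<in> EP E f"
  shows "(norm (u - p))\<^sup>2 \<le> (norm (x - p))\<^sup>2 - (norm (u - x))\<^sup>2"
proof -
  have "p \<in> E" "f p u \<ge> 0" using \<open>p \<in> EP E f\<close> \<open>u \<in> E\<close> by (auto simp: EP_def)
  moreover have "f u p + f p u \<le> 0" using bifunction_conditionsD(2)[OF assms(1) \<open>u \<in> E\<close>] \<open>p \<in> E\<close> .
  ultimately have "(1 / r) * ((p - u) \<bullet> (u - x)) \<ge> 0" using res[OF \<open>p \<in> E\<close>] by linarith
  then have "(p - u) \<bullet> (u - x) \<ge> 0" using \<open>r > 0\<close> by (simp add: zero_le_divide_iff)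
  moreover have "(norm (x - p))\<^sup>2 = (norm (u - x))\<^sup>2 + 2 * ((p - u) \<bullet> (u - x)) + (norm (u - p))\<^sup>2"
    using norm_add_sq[of "x - u" "u - p"]
    by (simp add: norm_minus_commute inner_diff inner_commute algebra_simps)
  ultimately show ?thesis by linarith
qed

lemma resolvent_dual_bound:
  assumes "bifunction_conditions E f" "r > 0" "u \<in> E"
    and res: "\<And>z. z \<in> E \<Longrightarrow> f u z + (1 / r) * ((z - u) \<bullet> (u - x)) \<ge> 0"
    and "y \<in> E"
  shows "f y u \<le> norm (y - u) * norm (u - x) / r"
proof -
  have "f y u \<le> (1 / r) * ((y - u) \<bullet> (u - x))"
    using res[OF \<open>y \<in> E\<close>] bifunction_conditionsD(2)[OF assms(1) \<open>u \<in> E\<close> \<open>y \<in> E\<close>] by linarith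
  also have "\<dots> \<le> (1 / r) * (norm (y - u) * norm (u - x))"
    using \<open>r > 0\<close> by (intro mult_left_mono norm_cauchy_schwarz) auto
  finally show ?thesis by simp
qed

lemma resolvent_dual_eventually_le:
  assumes bc: "bifunction_conditions E f" and u: "\<And>n. u n \<in> E"
    and res: "\<And>n z. z \<in> E \<Longrightarrow> f (u n) z + (1 / r n) * ((z - u n) \<bullet> (u n - x n)) \<ge> 0"
    and "c > 0" and r: "\<forall>\<^sub>F n in sequentially. c \<le> r n"
    and bound: "\<And>n. norm (u n) \<le> B"
    and null: "(\<lambda>n. norm (u n - x n)) \<longlonglongrightarrow> 0"
    and "y \<in> E" "\<epsilon> > 0"
  shows "\<forall>\<^sub>F n in sequentially. f y (u n) \<le> \<epsilon>"
proof -
  define g where "g n = (norm y + B) * norm (u n - x n) / c" for n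
  have "g \<longlonglongrightarrow> (norm y + B) * 0 / c"
    unfolding g_def using \<open>c > 0\<close> by (intro tendsto_intros null) auto
  then have "\<forall>\<^sub>F n in sequentially. g n < \<epsilon>" using \<open>\<epsilon> > 0\<close> by (simp add: order_tendstoD)
  moreover have "\<forall>\<^sub>F n in sequentially. f y (u n) \<le> g n"
    using r
  proof eventually_elim
    case (elim n)
    then have "r n > 0" using \<open>c > 0\<close> by simp
    have "f y (u n) \<le> norm (y - u n) * norm (u n - x n) / r n"
      using resolvent_dual_bound[OF bc \<open>r n > 0\<close> u res \<open>y \<in> E\<close>] .
    also have "\<dots> \<le> norm (y - u n) * norm (u n - x n) / c"
      using elim \<open>c > 0\<close> by (intro divide_left_mono) auto
    also have "\<dots> \<le> g n" unfolding g_def using bound[of n] norm_triangle_ineq4[of y "u n"] \<open>c > 0\<close>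
      by (intro divide_right_mono mult_right_mono) auto
    finally show ?case .
  qed
  ultimately show ?thesis by eventually_elim simp
qed

text \<open>The weak limit solves the dual problem: it lies in every sublevel set \<open>{w. f y w \<le> \<epsilon>}\<close>,
  which is closed and convex by (A4), hence weakly closed.\<close>
lemma resolvent_weak_limit_in_EP:
  fixes E :: "'a::{real_inner,complete_space} set"
  assumes "closed E" "convex E" and bc: "bifunction_conditions E f"
    and u: "\<And>n. u n \<in> E"
    and res: "\<And>n z. z \<in> E \<Longrightarrow> f (u n) z + (1 / r n) * ((z - u n) \<bullet> (u n - x n)) \<ge> 0"
    and "c > 0" and r: "\<forall>\<^sub>F n in sequentially. c \<le> r n"
    and bound: "\<And>n. norm (u n) \<le> B"
    and null: "(\<lambda>n. norm (u n - x n)) \<longlonglongrightarrow> 0"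
    and wk: "weakly_converges u z"
  shows "z \<in> EP E f"
proof (rule EP_if_dual[OF bc \<open>convex E\<close>])
  show "z \<in> E" using closed_convex_weakly_closed[OF \<open>closed E\<close> \<open>convex E\<close> u wk] .
  fix y assume "y \<in> E"
  show "f y z \<le> 0"
  proof (rule field_le_epsilon)
    fix \<epsilon> :: real assume "\<epsilon> > 0"
    obtain N where N: "\<And>n. n \<ge> N \<Longrightarrow> f y (u n) \<le> \<epsilon>"
      using resolvent_dual_eventually_le[OF bc u res \<open>c > 0\<close> r bound null \<open>y \<in> E\<close> \<open>\<epsilon> > 0\<close>]
      unfolding eventually_sequentially by blast
    have "strict_mono (\<lambda>i. i + N)" by (simp add: strict_mono_def)
    then have "weakly_converges (u \<circ> (\<lambda>i. i + N)) z" by (rule weakly_converges_subseq[OF wk])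
    moreover have "(u \<circ> (\<lambda>i. i + N)) i \<in> {w\<in>E. f y w \<le> \<epsilon>}" for i using u N by simp
    ultimately have "z \<in> {w\<in>E. f y w \<le> \<epsilon>}"
      using closed_convex_weakly_closed[OF lsc_on_closed_sublevel[OF \<open>closed E\<close> bifunction_conditionsD(5)[OF bc \<open>y \<in> E\<close>]]
          convex_on_sublevel_convex[OF bifunction_conditionsD(4)[OF bc \<open>y \<in> E\<close>]]] by blast
    then show "f y z \<le> 0 + \<epsilon>" by simp
  qed
qed

section \<open>The iteration\<close>

lemma liminf_ereal_pos_imp_eventually:
  assumes "liminf (\<lambda>n. ereal (X n)) > 0"
  shows "\<exists>c>0. \<forall>\<^sub>F n in sequentially. c < X n"
proof -
  obtain c where "0 < ereal c" "ereal c < liminf (\<lambda>n. ereal (X n))"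
    using ereal_dense2[OF assms] by blast
  then have "c > 0" "\<forall>\<^sub>F n in sequentially. ereal c < ereal (X n)"
    using less_LiminfD[of "ereal c" sequentially "\<lambda>n. ereal (X n)"] by auto
  then show ?thesis by (auto elim: eventually_mono)
qed

lemma telescoping_null:
  fixes a D :: "nat \<Rightarrow> real"
  assumes "a \<longlonglongrightarrow> L" "c > 0" "\<And>n. 0 \<le> D n" "\<forall>\<^sub>F n in sequentially. c * D n \<le> a n - a (Suc n)"
  shows "D \<longlonglongrightarrow> 0"
proof -
  have "(\<lambda>n. a n - a (Suc n)) \<longlonglongrightarrow> L - L" by (intro tendsto_diff assms(1) LIMSEQ_Suc)
  then have "(\<lambda>n. c * D n) \<longlonglongrightarrow> 0"
    using assms(2,3) by (intro real_tendsto_sandwich[OF _ assms(4) tendsto_const]) auto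
  then have "(\<lambda>n. (1 / c) * (c * D n)) \<longlonglongrightarrow> (1 / c) * 0" by (intro tendsto_intros)
  then show ?thesis using \<open>c > 0\<close> by simp
qed

text \<open>One step of the iteration, measured against a common solution \<open>p\<close>: the resolvent step gains
  \<open>\<parallel>u - x\<parallel>\<^sup>2\<close>, the convex combination in \<open>y\<close> gains \<open>\<parallel>x - S u\<parallel>\<^sup>2\<close>, and \<open>S\<close> loses nothing at \<open>p\<close>.\<close>
lemma hybrid_resolvent_step_estimate:
  assumes gh: "generalized_hybrid E lam gam S" and bc: "bifunction_conditions E f"
    and p: "p \<in> fixset E S \<inter> EP E f"
    and "r > 0" "u \<in> E" and res: "\<And>z. z \<in> E \<Longrightarrow> f u z + (1 / r) * ((z - u) \<bullet> (u - x)) \<ge> 0"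
    and "0 \<le> \<beta>" "\<beta> \<le> 1" and y: "y = (1 - \<beta>) *\<^sub>R x + \<beta> *\<^sub>R S u" "y \<in> E"
    and "0 \<le> a" "a \<le> 1"
  shows "(norm ((1 - a) *\<^sub>R x + a *\<^sub>R S y - p))\<^sup>2
    \<le> (norm (x - p))\<^sup>2 - a * \<beta> * (norm (u - x))\<^sup>2 - a * (\<beta> * (1 - \<beta>)) * (norm (x - S u))\<^sup>2"
proof -
  have "p \<in> fixset E S" "p \<in> EP E f" using p by auto
  have "norm (S u - p) \<le> norm (u - p)"
    using generalized_hybrid_quasi_nonexpansive[OF gh \<open>u \<in> E\<close> \<open>p \<in> fixset E S\<close>] .
  then have "(norm (S u - p))\<^sup>2 \<le> (norm (u - p))\<^sup>2" by (simp add: power_mono)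
  then have Su: "(norm (S u - p))\<^sup>2 \<le> (norm (x - p))\<^sup>2 - (norm (u - x))\<^sup>2"
    using resolvent_sq_dist[OF bc \<open>r > 0\<close> \<open>u \<in> E\<close> res \<open>p \<in> EP E f\<close>] by linarith
  have "y - p = (1 - \<beta>) *\<^sub>R (x - p) + \<beta> *\<^sub>R (S u - p)" by (simp add: y algebra_simps)
  then have "(norm (y - p))\<^sup>2 = (1 - \<beta>) * (norm (x - p))\<^sup>2 + \<beta> * (norm (S u - p))\<^sup>2 - \<beta> * (1 - \<beta>) * (norm (x - S u))\<^sup>2"
    by (simp add: norm_convex_combination_sq)
  also have "\<dots> \<le> (norm (x - p))\<^sup>2 - \<beta> * (norm (u - x))\<^sup>2 - \<beta> * (1 - \<beta>) * (norm (x - S u))\<^sup>2"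
    using mult_left_mono[OF Su \<open>0 \<le> \<beta>\<close>] by (simp add: algebra_simps)
  finally have yp: "(norm (y - p))\<^sup>2 \<le> \<dots>" .
  have "norm (S y - p) \<le> norm (y - p)"
    using generalized_hybrid_quasi_nonexpansive[OF gh \<open>y \<in> E\<close> \<open>p \<in> fixset E S\<close>] .
  then have Syp: "(norm (S y - p))\<^sup>2 \<le> (norm (y - p))\<^sup>2" by (simp add: power_mono)
  have "(1 - a) *\<^sub>R x + a *\<^sub>R S y - p = (1 - a) *\<^sub>R (x - p) + a *\<^sub>R (S y - p)" by (simp add: algebra_simps)
  then have "(norm ((1 - a) *\<^sub>R x + a *\<^sub>R S y - p))\<^sup>2
      \<le> (1 - a) * (norm (x - p))\<^sup>2 + a * (norm (S y - p))\<^sup>2"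
    using \<open>0 \<le> a\<close> \<open>a \<le> 1\<close> by (simp add: norm_convex_combination_sq)
  also have "\<dots> \<le> (1 - a) * (norm (x - p))\<^sup>2 + a * ((norm (x - p))\<^sup>2 - \<beta> * (norm (u - x))\<^sup>2
      - \<beta> * (1 - \<beta>) * (norm (x - S u))\<^sup>2)"
    using order_trans[OF Syp yp] \<open>0 \<le> a\<close> by (intro add_left_mono mult_left_mono)
  finally show ?thesis by (simp add: algebra_simps)
qed

text \<open>The hypotheses of the theorem, except \<open>E \<noteq> {}\<close> (implied by \<open>x 0 \<in> E\<close>) and \<open>b < 1\<close>,
  which the argument does not need.\<close>
locale hybrid_equilibrium_iteration =
  fixes E :: "'a::{real_inner,complete_space} set" and f :: "'a \<Rightarrow> 'a \<Rightarrow> real"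
    and S :: "'a \<Rightarrow> 'a" and lam gam \<alpha> b :: real and \<alpha>s \<beta>s r :: "nat \<Rightarrow> real"
    and x u y :: "nat \<Rightarrow> 'a"
  assumes closed: "closed E" and convex: "convex E"
    and bifunction: "bifunction_conditions E f"
    and hybrid: "generalized_hybrid E lam gam S"
    and solvable: "fixset E S \<inter> EP E f \<noteq> {}"
    and \<alpha>_pos: "\<alpha> > 0" and \<alpha>s_bounds: "\<And>n. \<alpha> \<le> \<alpha>s n" "\<And>n. \<alpha>s n \<le> 1"
    and r_pos: "\<And>n. r n > 0" and r_liminf: "liminf (\<lambda>n. ereal (r n)) > 0"
    and b_pos: "b > 0" and \<beta>s_bounds: "\<And>n. b \<le> \<beta>s n" "\<And>n. \<beta>s n \<le> 1"
    and \<beta>s_liminf: "liminf (\<lambda>n. ereal (\<beta>s n * (1 - \<beta>s n))) > 0"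
    and x_0: "x 0 \<in> E"
    and u_in_E: "\<And>n. u n \<in> E"
    and resolvent: "\<And>n z. z \<in> E \<Longrightarrow> f (u n) z + (1 / r n) * ((z - u n) \<bullet> (u n - x n)) \<ge> 0"
    and y_eq: "\<And>n. y n = (1 - \<beta>s n) *\<^sub>R x n + \<beta>s n *\<^sub>R S (u n)"
    and x_Suc: "\<And>n. x (Suc n) = (1 - \<alpha>s n) *\<^sub>R x n + \<alpha>s n *\<^sub>R S (y n)"
begin

abbreviation solutions :: "'a set" where
  "solutions \<equiv> fixset E S \<inter> EP E f"

lemma solutions_closed: "closed solutions"
  using generalized_hybrid_fixset_closed[OF hybrid closed] EP_closed[OF bifunction convex closed]
  by (rule closed_Int)

lemma solutions_convex: "convex solutions"
  using generalized_hybrid_fixset_convex[OF hybrid convex] EP_convex[OF bifunction convex]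
  by (rule convex_Int)

lemma \<alpha>s_nonneg: "0 \<le> \<alpha>s n"
  using \<alpha>_pos \<alpha>s_bounds(1)[of n] by linarith

lemma \<beta>s_nonneg: "0 \<le> \<beta>s n"
  using b_pos \<beta>s_bounds(1)[of n] by linarith

lemma y_in_E: "x n \<in> E \<Longrightarrow> y n \<in> E"
  using convex u_in_E \<beta>s_nonneg \<beta>s_bounds(2) generalized_hybrid_self_map[OF hybrid]
  by (simp add: y_eq convex_def)

lemma x_in_E: "x n \<in> E"
proof (induction n)
  case 0
  show ?case by (rule x_0)
next
  case (Suc n)
  then show ?case
    using convex y_in_E[OF Suc] \<alpha>s_nonneg \<alpha>s_bounds(2) generalized_hybrid_self_map[OF hybrid]
    by (simp add: x_Suc convex_def)
qed

lemma step_estimate: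
  assumes "p \<in> solutions"
  shows "(norm (x (Suc n) - p))\<^sup>2 \<le> (norm (x n - p))\<^sup>2 - \<alpha>s n * \<beta>s n * (norm (u n - x n))\<^sup>2
    - \<alpha>s n * (\<beta>s n * (1 - \<beta>s n)) * (norm (x n - S (u n)))\<^sup>2"
  unfolding x_Suc
  by (rule hybrid_resolvent_step_estimate[OF hybrid bifunction assms r_pos u_in_E resolvent
        \<beta>s_nonneg \<beta>s_bounds(2) y_eq y_in_E[OF x_in_E] \<alpha>s_nonneg \<alpha>s_bounds(2)])

lemma step_gains:
  assumes "p \<in> solutions"
  shows "\<alpha>s n * \<beta>s n * (norm (u n - x n))\<^sup>2 \<le> (norm (x n - p))\<^sup>2 - (norm (x (Suc n) - p))\<^sup>2"
    and "\<alpha>s n * (\<beta>s n * (1 - \<beta>s n)) * (norm (x n - S (u n)))\<^sup>2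
      \<le> (norm (x n - p))\<^sup>2 - (norm (x (Suc n) - p))\<^sup>2"
proof -
  have "0 \<le> \<alpha>s n * \<beta>s n * (norm (u n - x n))\<^sup>2"
    "0 \<le> \<alpha>s n * (\<beta>s n * (1 - \<beta>s n)) * (norm (x n - S (u n)))\<^sup>2"
    using \<alpha>s_nonneg[of n] \<beta>s_nonneg[of n] \<beta>s_bounds(2)[of n] by simp_all
  then show "\<alpha>s n * \<beta>s n * (norm (u n - x n))\<^sup>2 \<le> (norm (x n - p))\<^sup>2 - (norm (x (Suc n) - p))\<^sup>2"
    and "\<alpha>s n * (\<beta>s n * (1 - \<beta>s n)) * (norm (x n - S (u n)))\<^sup>2
      \<le> (norm (x n - p))\<^sup>2 - (norm (x (Suc n) - p))\<^sup>2"
    using step_estimate[OF assms, of n] by linarith+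
qed

lemma fejer:
  assumes "p \<in> solutions"
  shows "norm (x (Suc n) - p) \<le> norm (x n - p)"
proof (rule power2_le_imp_le)
  have "0 \<le> \<alpha>s n * \<beta>s n * (norm (u n - x n))\<^sup>2" using \<alpha>s_nonneg[of n] \<beta>s_nonneg[of n] by simp
  then show "(norm (x (Suc n) - p))\<^sup>2 \<le> (norm (x n - p))\<^sup>2" using step_gains(1)[OF assms, of n] by linarith
qed simp

lemma sq_dist_convergent:
  assumes "p \<in> solutions"
  obtains L where "(\<lambda>n. (norm (x n - p))\<^sup>2) \<longlonglongrightarrow> L"
proof -
  have "decseq (\<lambda>n. (norm (x n - p))\<^sup>2)"
    unfolding decseq_Suc_iff using fejer[OF assms] by (simp add: power_mono)
  then obtain L where "(\<lambda>n. (norm (x n - p))\<^sup>2) \<longlonglongrightarrow> L" by (rule decseq_convergent[of _ 0]) auto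
  then show ?thesis by (rule that)
qed

lemma u_minus_x_null: "(\<lambda>n. norm (u n - x n)) \<longlonglongrightarrow> 0"
proof -
  obtain p where p: "p \<in> solutions" using solvable by blast
  obtain L where L: "(\<lambda>n. (norm (x n - p))\<^sup>2) \<longlonglongrightarrow> L" using sq_dist_convergent[OF p] .
  have "(\<lambda>n. (norm (u n - x n))\<^sup>2) \<longlonglongrightarrow> 0"
  proof (rule telescoping_null[OF L])
    show "\<alpha> * b > 0" using \<alpha>_pos b_pos by simp
    have "\<alpha> * b * (norm (u n - x n))\<^sup>2 \<le> (norm (x n - p))\<^sup>2 - (norm (x (Suc n) - p))\<^sup>2" for n
    proof -
      have "\<alpha> * b \<le> \<alpha>s n * \<beta>s n"
        using \<alpha>_pos b_pos \<alpha>s_bounds(1)[of n] \<beta>s_bounds(1)[of n] by (intro mult_mono) auto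
      then have "\<alpha> * b * (norm (u n - x n))\<^sup>2 \<le> \<alpha>s n * \<beta>s n * (norm (u n - x n))\<^sup>2"
        by (intro mult_right_mono) auto
      then show ?thesis using step_gains(1)[OF p, of n] by linarith
    qed
    then show "\<forall>\<^sub>F n in sequentially. \<alpha> * b * (norm (u n - x n))\<^sup>2
        \<le> (norm (x n - p))\<^sup>2 - (norm (x (Suc n) - p))\<^sup>2" by simp
  qed simp
  then show ?thesis using tendsto_real_sqrt[of _ 0] by fastforce
qed

lemma x_minus_Su_null: "(\<lambda>n. norm (x n - S (u n))) \<longlonglongrightarrow> 0"
proof -
  obtain p where p: "p \<in> solutions" using solvable by blast
  obtain L where L: "(\<lambda>n. (norm (x n - p))\<^sup>2) \<longlonglongrightarrow> L" using sq_dist_convergent[OF p] .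
  obtain c where "c > 0" and c: "\<forall>\<^sub>F n in sequentially. c < \<beta>s n * (1 - \<beta>s n)"
    using liminf_ereal_pos_imp_eventually[OF \<beta>s_liminf] by blast
  have "(\<lambda>n. (norm (x n - S (u n)))\<^sup>2) \<longlonglongrightarrow> 0"
  proof (rule telescoping_null[OF L])
    show "\<alpha> * c > 0" using \<alpha>_pos \<open>c > 0\<close> by simp
    show "\<forall>\<^sub>F n in sequentially. \<alpha> * c * (norm (x n - S (u n)))\<^sup>2
        \<le> (norm (x n - p))\<^sup>2 - (norm (x (Suc n) - p))\<^sup>2"
      using c
    proof eventually_elim
      case (elim n)
      then have "\<alpha> * c \<le> \<alpha>s n * (\<beta>s n * (1 - \<beta>s n))"
        using \<alpha>_pos \<open>c > 0\<close> \<alpha>s_bounds(1)[of n] by (intro mult_mono) auto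
      then have "\<alpha> * c * (norm (x n - S (u n)))\<^sup>2 \<le> \<alpha>s n * (\<beta>s n * (1 - \<beta>s n)) * (norm (x n - S (u n)))\<^sup>2"
        by (intro mult_right_mono) auto
      then show ?case using step_gains(2)[OF p, of n] by linarith
    qed
  qed simp
  then show ?thesis using tendsto_real_sqrt[of _ 0] by fastforce
qed

lemma Su_minus_u_null: "(\<lambda>n. S (u n) - u n) \<longlonglongrightarrow> 0"
proof -
  have "(\<lambda>n. - (u n - x n) - (x n - S (u n))) \<longlonglongrightarrow> - 0 - 0"
    using u_minus_x_null x_minus_Su_null by (intro tendsto_intros) (simp_all add: tendsto_norm_zero_iff)
  then show ?thesis by (simp add: algebra_simps)
qed

lemma u_bounded:
  assumes "p \<in> solutions"
  shows "norm (u n) \<le> norm (x 0 - p) + norm p"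
proof -
  have "(norm (u n - p))\<^sup>2 \<le> (norm (x n - p))\<^sup>2 - (norm (u n - x n))\<^sup>2"
    using assms by (intro resolvent_sq_dist[OF bifunction r_pos[of n] u_in_E[of n] resolvent[where n=n]]) auto
  then have "(norm (u n - p))\<^sup>2 \<le> (norm (x n - p))\<^sup>2" using zero_le_power2[of "norm (u n - x n)"] by linarith
  then have "norm (u n - p) \<le> norm (x n - p)" by (rule power2_le_imp_le) simp
  also have "\<dots> \<le> norm (x 0 - p)" using fejer_norm_mono[of x p 0 n] fejer[OF assms] by simp
  finally show ?thesis using norm_triangle_sub[of "u n" p] by simp
qed

lemma weak_cluster_point_in_solutions:
  assumes "strict_mono s" "weakly_converges (x \<circ> s) z"
  shows "z \<in> solutions"
proof -
  obtain p where p: "p \<in> solutions" using solvable by blast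
  define B where "B = norm (x 0 - p) + norm p"
  have null: "(\<lambda>i. norm ((u \<circ> s) i - (x \<circ> s) i)) \<longlonglongrightarrow> 0"
    using LIMSEQ_subseq_LIMSEQ[OF u_minus_x_null assms(1)] by (simp add: o_def)
  have wk: "weakly_converges (u \<circ> s) z" by (rule weakly_converges_norm_diff[OF assms(2) null])
  have u_s: "(u \<circ> s) i \<in> E" "norm ((u \<circ> s) i) \<le> B" for i
    using u_in_E u_bounded[OF p] by (simp_all add: B_def)
  have "z \<in> E" by (rule closed_convex_weakly_closed[OF closed convex u_s(1) wk])
  have "S z = z"
  proof (rule generalized_hybrid_demiclosed[OF hybrid u_s(1) \<open>z \<in> E\<close> _ wk])
    show "norm ((u \<circ> s) i - z) \<le> B + norm z" for i
      using u_s(2)[of i] norm_triangle_ineq4[of "(u \<circ> s) i" z] by simp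
    show "(\<lambda>i. S ((u \<circ> s) i) - (u \<circ> s) i) \<longlonglongrightarrow> 0"
      using LIMSEQ_subseq_LIMSEQ[OF Su_minus_u_null assms(1)] by (simp add: o_def)
  qed
  obtain c where "c > 0" and "\<forall>\<^sub>F n in sequentially. c < r n"
    using liminf_ereal_pos_imp_eventually[OF r_liminf] by blast
  then have "\<forall>\<^sub>F i in sequentially. c \<le> (r \<circ> s) i"
    using eventually_subseq[OF assms(1)] by (force elim: eventually_mono)
  have "z \<in> EP E f"
    using resolvent by (intro resolvent_weak_limit_in_EP[OF closed convex bifunction u_s(1) _ \<open>c > 0\<close>
          \<open>\<forall>\<^sub>F i in sequentially. c \<le> (r \<circ> s) i\<close> u_s(2) null wk]) auto
  with \<open>S z = z\<close> \<open>z \<in> E\<close> show ?thesis by (simp add: fixset_def)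
qed

end

theorem theorem3p1:
  fixes E :: "'a::{real_inner, complete_space} set"
    and f :: "'a \<Rightarrow> 'a \<Rightarrow> real" and S :: "'a \<Rightarrow> 'a"
    and lam gam \<alpha> b :: real and x0 :: 'a
    and \<alpha>s \<beta>s r :: "nat \<Rightarrow> real" and x u y :: "nat \<Rightarrow> 'a"
  assumes "E \<noteq> {}" "closed E" "convex E"
    and "bifunction_conditions E f"
    and "generalized_hybrid E lam gam S"
    and "fixset E S \<inter> EP E f \<noteq> {}"
    and "\<alpha> > 0" "\<And>n. \<alpha> \<le> \<alpha>s n \<and> \<alpha>s n \<le> 1"
    and "\<And>n. r n > 0" "liminf (\<lambda>n. ereal (r n)) > 0"
    and "0 < b" "b < 1" "\<And>n. b \<le> \<beta>s n \<and> \<beta>s n \<le> 1"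
    and "liminf (\<lambda>n. ereal (\<beta>s n * (1 - \<beta>s n))) > 0"
    and "x0 \<in> E" "x 0 = x0"
    and "\<And>n. u n \<in> E \<and> (\<forall>z\<in>E. f (u n) z + (1 / r n) * ((z - u n) \<bullet> (u n - x n)) \<ge> 0)"
    and "\<And>n. y n = (1 - \<beta>s n) *\<^sub>R x n + \<beta>s n *\<^sub>R S (u n)"
    and "\<And>n. x (Suc n) = (1 - \<alpha>s n) *\<^sub>R x n + \<alpha>s n *\<^sub>R S (y n)"
  shows "\<exists>v \<in> fixset E S \<inter> EP E f. weakly_converges x v \<and>
           (\<lambda>n. metric_proj (fixset E S \<inter> EP E f) (x n)) \<longlonglongrightarrow> v"
proof -
  interpret hybrid_equilibrium_iteration E f S lam gam \<alpha> b \<alpha>s \<beta>s r x u y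
    using assms by unfold_locales auto
  show ?thesis
    by (rule fejer_weakly_convergent[OF solutions_closed solutions_convex solvable])
      (use fejer weak_cluster_point_in_solutions in auto)
qed

end
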